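(* Let $v_1,\dots,v_m\in\mathbb{Q}^n$, let $P=P_{v_1,\dots,v_m}$, and let $a_1\le b_1,\dots,a_m\le b_m$ be elements of $\mathbb{Q}_P$. If $w\in\sum_{i=1}^m\mathbb{Q}_Pv_i$ can be written as $w=\sum_{i=1}^m x_iv_i$ with rational numbers $a_i\le x_i\le b_i$ ($i=1,\dots,m$), then there exist $y_1,\dots,y_m\in\mathbb{Q}_P$ with $a_i\le y_i\le b_i$ for all $i$ and $w=\sum_{i=1}^m y_iv_i$.
   Context: An elementary integral relation among $v_1,\dots,v_m$ is a relation $\sum_{i=1}^m a_iv_i=0$ with $a_i\in\mathbb{Z}$ not all zero, whose support $\{i:a_i\neq0\}$ is minimal (inclusion-wise) among supports of nontrivial linear relations, and whose coefficients have greatest common divisor $1$. $P_{v_1,\dots,v_m}$ is the (finite) set of primes $p$ for which there exists an elementary integral relation $\sum a_iv_i=0$ with $p\mid\prod_{a_i\neq0}a_i$. For a set of primes $P$, $\mathbb{Q}_P=\{a/b: a,b\in\mathbb{Z},\ b\neq0,\ \text{all prime factors of } b \text{ lie in } P\}$ (so $\mathbb{Q}_\emptyset=\mathbb{Z}$). *)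

theory Defs
  imports Complex_Main "HOL-Computational_Algebra.Primes"
begin

text \<open>Vectors v_1..v_m in Q^n are encoded as v :: nat => nat => rat, where
  v i (for i < m) is the i-th vector and v i j (for j < n) its j-th coordinate.\<close>

definition supp :: "nat \<Rightarrow> (nat \<Rightarrow> 'a::zero) \<Rightarrow> nat set" where
  "supp m c = {i. i < m \<and> c i \<noteq> 0}"

definition lin_rel :: "(nat \<Rightarrow> nat \<Rightarrow> rat) \<Rightarrow> nat \<Rightarrow> nat \<Rightarrow> (nat \<Rightarrow> rat) \<Rightarrow> bool" where
  "lin_rel v m n c \<longleftrightarrow> (\<exists>i<m. c i \<noteq> 0) \<and> (\<forall>j<n. (\<Sum>i<m. c i * v i j) = 0)"

definition elem_int_rel :: "(nat \<Rightarrow> nat \<Rightarrow> rat) \<Rightarrow> nat \<Rightarrow> nat \<Rightarrow> (nat \<Rightarrow> int) \<Rightarrow> bool" where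
  "elem_int_rel v m n a \<longleftrightarrow>
     lin_rel v m n (\<lambda>i. of_int (a i)) \<and>
     (\<forall>c. lin_rel v m n c \<longrightarrow> \<not> (supp m c \<subset> supp m a)) \<and>
     Gcd (a ` {..<m}) = 1"

definition P_set :: "(nat \<Rightarrow> nat \<Rightarrow> rat) \<Rightarrow> nat \<Rightarrow> nat \<Rightarrow> nat set" where
  "P_set v m n = {p. prime p \<and>
     (\<exists>a. elem_int_rel v m n a \<and> int p dvd (\<Prod>i\<in>supp m a. a i))}"

definition Q_loc :: "nat set \<Rightarrow> rat set" where
  "Q_loc P = {q. \<exists>(a::int) (b::int). b \<noteq> 0 \<and> q = of_int a / of_int b \<and>
                 (\<forall>p::nat. prime p \<and> int p dvd b \<longrightarrow> p \<in> P)}"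

end

theory Submission imports Defs begin

text \<open>
  Write \<open>Q\<^sub>P\<close> for \<open>Q_loc P\<close>. First, if a relation \<open>d\<close> among the \<open>v\<^sub>i\<close> has \<open>d\<^sub>i \<in> Q\<^sub>P\<close> for all
  \<open>i\<close> outside a set \<open>G\<close> that supports no relation, then all \<open>d\<^sub>i \<in> Q\<^sub>P\<close>: an elementary
  integral relation \<open>e\<close> with support inside that of \<open>d\<close> meets some \<open>k \<notin> G\<close>, all prime
  factors of \<open>e\<^sub>k\<close> lie in \<open>P\<close>, and subtracting \<open>(d\<^sub>k / e\<^sub>k) e\<close> from \<open>d\<close> shrinks the support.

  Now let \<open>G\<close> be the set of coordinates with \<open>x\<^sub>i \<notin> Q\<^sub>P\<close>. If \<open>G\<close> supports no relation, the
  first fact applies to \<open>x - c\<close>, where \<open>c\<close> represents \<open>w\<close> with coefficients in \<open>Q\<^sub>P\<close>.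
  Otherwise move \<open>x\<close> along a relation supported in \<open>G\<close> until some coordinate reaches one of
  its endpoints \<open>a\<^sub>i, b\<^sub>i \<in> Q\<^sub>P\<close>; this stays in the box, keeps \<open>w\<close> fixed and shrinks \<open>G\<close>.
\<close>

definition P_unit :: "nat set \<Rightarrow> int \<Rightarrow> bool" where
  "P_unit P b \<longleftrightarrow> b \<noteq> 0 \<and> (\<forall>p::nat. prime p \<and> int p dvd b \<longrightarrow> p \<in> P)"

lemma P_unit_1: "P_unit P 1"
  unfolding P_unit_def by (auto simp: prime_int_iff)

lemma P_unit_mult:
  assumes "P_unit P b" "P_unit P d"
  shows "P_unit P (b * d)"
  using assms unfolding P_unit_def by (auto simp: prime_dvd_mult_iff)

lemma P_unit_mono: "P_unit P b \<Longrightarrow> P \<subseteq> P' \<Longrightarrow> P_unit P' b"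
  unfolding P_unit_def by blast

lemma Q_loc_iff: "q \<in> Q_loc P \<longleftrightarrow> (\<exists>a b. P_unit P b \<and> q = of_int a / of_int b)"
  unfolding Q_loc_def P_unit_def by blast

lemma Q_loc_of_int: "of_int k \<in> Q_loc P"
  unfolding Q_loc_iff using P_unit_1 by force

lemma Q_loc_diff:
  assumes "q \<in> Q_loc P" "r \<in> Q_loc P"
  shows "q - r \<in> Q_loc P"
proof -
  obtain a b c d where ab: "P_unit P b" "q = of_int a / of_int b"
    and cd: "P_unit P d" "r = of_int c / of_int d"
    using assms unfolding Q_loc_iff by blast
  have "q - r = of_int (a * d - c * b) / of_int (b * d)"
    unfolding ab(2) cd(2) using ab(1) cd(1) by (simp add: P_unit_def field_simps)
  then show ?thesis unfolding Q_loc_iff using P_unit_mult[OF ab(1) cd(1)] by blast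
qed

lemma Q_loc_add:
  assumes "q \<in> Q_loc P" "r \<in> Q_loc P"
  shows "q + r \<in> Q_loc P"
  using Q_loc_diff[OF assms(1) Q_loc_diff[OF Q_loc_of_int[of 0] assms(2)]] by simp

lemma Q_loc_mult:
  assumes "q \<in> Q_loc P" "r \<in> Q_loc P"
  shows "q * r \<in> Q_loc P"
proof -
  obtain a b c d where ab: "P_unit P b" "q = of_int a / of_int b"
    and cd: "P_unit P d" "r = of_int c / of_int d"
    using assms unfolding Q_loc_iff by blast
  have "q * r = of_int (a * c) / of_int (b * d)"
    unfolding ab(2) cd(2) by simp
  then show ?thesis unfolding Q_loc_iff using P_unit_mult[OF ab(1) cd(1)] by blast
qed

lemma Q_loc_divide:
  assumes "q \<in> Q_loc P" "P_unit P e"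
  shows "q / of_int e \<in> Q_loc P"
proof -
  obtain a b where ab: "P_unit P b" "q = of_int a / of_int b"
    using assms unfolding Q_loc_iff by blast
  have "q / of_int e = of_int a / of_int (b * e)"
    unfolding ab(2) by simp
  then show ?thesis unfolding Q_loc_iff using P_unit_mult[OF ab(1) assms(2)] by blast
qed

lemma common_denominator:
  fixes c :: "nat \<Rightarrow> rat"
  shows "\<exists>D::int. D \<noteq> 0 \<and> (\<forall>i<m. of_int D * c i \<in> \<int>)"
proof (induction m)
  case 0
  show ?case by (intro exI[of _ 1]) auto
next
  case (Suc m)
  then obtain D where D: "D \<noteq> 0" "\<forall>i<m. of_int D * c i \<in> \<int>" by blast
  obtain p q where pq: "quotient_of (c m) = (p, q)" by fastforce
  have "q > 0" "c m = of_int p / of_int q"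
    using quotient_of_denom_pos[OF pq] quotient_of_div[OF pq] by auto
  then have "of_int (D * q) * c m \<in> \<int>" by simp
  moreover have "of_int (D * q) * c i \<in> \<int>" if "i < m" for i
    using D(2) that by (metis Ints_mult Ints_of_int mult.commute mult.left_commute of_int_mult)
  ultimately show ?case
    using D(1) \<open>q > 0\<close> by (intro exI[of _ "D * q"]) (auto simp: less_Suc_eq)
qed

lemma primitive_integer_multiple:
  fixes c :: "nat \<Rightarrow> rat"
  assumes "k < m" "c k \<noteq> 0"
  shows "\<exists>l e. l \<noteq> 0 \<and> (\<forall>i<m. of_int (e i) = l * c i) \<and> Gcd (e ` {..<m}) = 1"
proof -
  obtain D where D: "D \<noteq> 0" "\<forall>i<m. of_int D * c i \<in> \<int>"
    using common_denominator by blast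
  define e0 where "e0 i = \<lfloor>of_int D * c i\<rfloor>" for i
  have e0: "of_int (e0 i) = of_int D * c i" if "i < m" for i
    using D(2) that unfolding e0_def by (metis Ints_cases floor_of_int)
  define g where "g = Gcd (e0 ` {..<m})"
  have "e0 k \<noteq> 0"
    using e0[OF assms(1)] D(1) assms(2) by auto
  moreover have "g dvd e0 k"
    unfolding g_def using assms(1) by (simp add: Gcd_dvd)
  ultimately have "g > 0"
    unfolding g_def by (metis Gcd_int_greater_eq_0 dvd_0_left_iff order_le_less)
  define e where "e i = e0 i div g" for i
  have e0_eq: "e0 i = g * e i" if "i < m" for i
    unfolding e_def g_def using that by (simp add: Gcd_dvd)
  have img: "e0 ` {..<m} = (*) g ` e ` {..<m}"
    using e0_eq by (force simp: image_image)
  have "g = normalize (g * Gcd (e ` {..<m}))"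
    using Gcd_mult[of g "e ` {..<m}"] unfolding img[symmetric] g_def[symmetric] .
  then have "Gcd (e ` {..<m}) = 1"
    using \<open>g > 0\<close> by (simp add: abs_mult)
  moreover have "of_int (e i) = of_int D / of_int g * c i" if "i < m" for i
    using e0[OF that] e0_eq[OF that] \<open>g > 0\<close> by (simp add: field_simps)
  ultimately show ?thesis
    using D(1) \<open>g > 0\<close> by (intro exI[of _ "of_int D / of_int g"] exI[of _ e]) auto
qed

lemma finite_supp: "finite (supp m c)"
  unfolding supp_def by simp

lemma supp_of_int [simp]: "supp m (\<lambda>i. of_int (e i) :: rat) = supp m e"
  unfolding supp_def by simp

definition circuit :: "(nat \<Rightarrow> nat \<Rightarrow> rat) \<Rightarrow> nat \<Rightarrow> nat \<Rightarrow> (nat \<Rightarrow> rat) \<Rightarrow> bool" where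
  "circuit v m n c \<longleftrightarrow> lin_rel v m n c \<and> (\<forall>c'. lin_rel v m n c' \<longrightarrow> \<not> supp m c' \<subset> supp m c)"

lemma elem_int_rel_iff_circuit:
  "elem_int_rel v m n e \<longleftrightarrow> circuit v m n (\<lambda>i. of_int (e i)) \<and> Gcd (e ` {..<m}) = 1"
  unfolding elem_int_rel_def circuit_def by simp

lemma circuit_below:
  assumes "lin_rel v m n d"
  shows "\<exists>c. circuit v m n c \<and> supp m c \<subseteq> supp m d"
  using assms
proof (induction "card (supp m d)" arbitrary: d rule: less_induct)
  case less
  show ?case
  proof (cases "circuit v m n d")
    case True
    then show ?thesis by blast
  next
    case False
    then obtain d' where "lin_rel v m n d'" "supp m d' \<subset> supp m d"
      using less.prems unfolding circuit_def by blast
    then show ?thesis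
      using less.hyps[of d'] psubset_card_mono[OF finite_supp] by (meson order.trans psubset_imp_subset)
  qed
qed

lemma circuit_rescale:
  assumes "l \<noteq> 0" "\<forall>i<m. c' i = l * c i"
  shows "circuit v m n c' \<longleftrightarrow> circuit v m n c"
proof -
  have "supp m c' = supp m c"
    using assms unfolding supp_def by auto
  moreover have "(\<Sum>i<m. c' i * v i j) = l * (\<Sum>i<m. c i * v i j)" for j
    using assms(2) by (simp add: sum_distrib_left mult.assoc)
  then have "lin_rel v m n c' \<longleftrightarrow> lin_rel v m n c"
    using assms unfolding lin_rel_def by auto
  ultimately show ?thesis
    unfolding circuit_def by simp
qed

lemma elem_int_rel_of_circuit:
  assumes "circuit v m n c"
  shows "\<exists>e. elem_int_rel v m n e \<and> supp m e = supp m c"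
proof -
  obtain k where "k < m" "c k \<noteq> 0"
    using assms unfolding circuit_def lin_rel_def by blast
  then obtain l e where l: "l \<noteq> 0" "\<forall>i<m. of_int (e i) = l * c i" and "Gcd (e ` {..<m}) = 1"
    using primitive_integer_multiple by blast
  moreover have "supp m e = supp m c"
    using l unfolding supp_def by (metis mult_eq_0_iff of_int_eq_0_iff)
  ultimately show ?thesis
    using assms circuit_rescale[OF l] unfolding elem_int_rel_iff_circuit by blast
qed

lemma elem_int_rel_below:
  assumes "lin_rel v m n d"
  shows "\<exists>e. elem_int_rel v m n e \<and> supp m e \<subseteq> supp m d"
  using circuit_below[OF assms] elem_int_rel_of_circuit by fastforce

lemma elem_int_rel_coeff_P_unit:
  assumes "elem_int_rel v m n e" "k \<in> supp m e"
  shows "P_unit (P_set v m n) (e k)"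
  unfolding P_unit_def
proof (intro conjI allI impI)
  show "e k \<noteq> 0"
    using assms(2) unfolding supp_def by simp
  fix p :: nat
  assume p: "prime p \<and> int p dvd e k"
  moreover have "e k dvd (\<Prod>i\<in>supp m e. e i)"
    using finite_supp assms(2) by (rule dvd_prodI)
  ultimately show "p \<in> P_set v m n"
    using assms(1) unfolding P_set_def by (blast intro: dvd_trans)
qed

lemma relation_in_Q_loc:
  assumes P: "P_set v m n \<subseteq> P"
    and G: "\<forall>c. lin_rel v m n c \<longrightarrow> \<not> supp m c \<subseteq> G"
    and d: "\<forall>j<n. (\<Sum>i<m. d i * v i j) = 0"
    and d_outside: "\<forall>i<m. i \<notin> G \<longrightarrow> d i \<in> Q_loc P"
  shows "\<forall>i<m. d i \<in> Q_loc P"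
  using d d_outside
proof (induction "card (supp m d)" arbitrary: d rule: less_induct)
  case less
  show ?case
  proof (cases "\<forall>i<m. d i = 0")
    case True
    then show ?thesis
      using Q_loc_of_int[of 0] by simp
  next
    case False
    then have "lin_rel v m n d"
      using less.prems(1) unfolding lin_rel_def by blast
    then obtain e where e: "elem_int_rel v m n e" "supp m e \<subseteq> supp m d"
      using elem_int_rel_below by blast
    then have "\<not> supp m e \<subseteq> G"
      using G unfolding elem_int_rel_def by (metis supp_of_int)
    then obtain k where k: "k \<in> supp m e" "k \<notin> G"
      by blast
    then have "k < m" "e k \<noteq> 0"
      unfolding supp_def by auto
    define \<mu> where "\<mu> = d k / of_int (e k)"
    have \<mu>: "\<mu> \<in> Q_loc P"
      unfolding \<mu>_def using less.prems(2) \<open>k < m\<close> k(2)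
      by (intro Q_loc_divide P_unit_mono[OF elem_int_rel_coeff_P_unit[OF e(1) k(1)] P]) auto
    define d' where "d' i = d i - \<mu> * of_int (e i)" for i
    have d'_rel: "\<forall>j<n. (\<Sum>i<m. d' i * v i j) = 0"
      using less.prems(1) e(1) unfolding d'_def elem_int_rel_def lin_rel_def
      by (simp add: left_diff_distrib sum_subtractf mult.assoc flip: sum_distrib_left)
    have "supp m d' \<subset> supp m d"
    proof -
      have "supp m d' \<subseteq> supp m d"
        using e(2) unfolding supp_def d'_def by auto
      moreover have "k \<in> supp m d - supp m d'"
        using k e(2) \<open>e k \<noteq> 0\<close> unfolding supp_def d'_def \<mu>_def by auto
      ultimately show ?thesis by blast
    qed
    then have "card (supp m d') < card (supp m d)"
      by (simp add: finite_supp psubset_card_mono)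
    moreover have "\<forall>i<m. i \<notin> G \<longrightarrow> d' i \<in> Q_loc P"
      using less.prems(2) \<mu> unfolding d'_def by (simp add: Q_loc_diff Q_loc_mult Q_loc_of_int)
    ultimately have "\<forall>i<m. d' i \<in> Q_loc P"
      using d'_rel less.hyps by blast
    then have "\<forall>i<m. d' i + \<mu> * of_int (e i) \<in> Q_loc P"
      using \<mu> by (simp add: Q_loc_add Q_loc_mult Q_loc_of_int)
    then show ?thesis
      unfolding d'_def by simp
  qed
qed

lemma exists_step_to_boundary:
  fixes a b x c :: "'i \<Rightarrow> 'a::linordered_field"
  assumes "finite S" "S \<noteq> {}"
    and "\<forall>i\<in>S. c i \<noteq> 0 \<and> a i \<le> x i \<and> x i \<le> b i"
  shows "\<exists>t. (\<forall>i\<in>S. a i \<le> x i + t * c i \<and> x i + t * c i \<le> b i) \<and>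
             (\<exists>i\<in>S. x i + t * c i = a i \<or> x i + t * c i = b i)"
proof -
  \<comment> \<open>\<open>r i\<close> is the step at which coordinate \<open>i\<close> reaches the endpoint it moves towards\<close>
  define r where "r i = (if c i > 0 then b i - x i else a i - x i) / c i" for i
  have r_nonneg: "0 \<le> r i" if "i \<in> S" for i
    using assms(3) that unfolding r_def by (cases "c i > 0") (auto simp: zero_le_divide_iff)
  have within: "a i \<le> x i + t * c i \<and> x i + t * c i \<le> b i" if "i \<in> S" "0 \<le> t" "t \<le> r i" for i t
  proof (cases "c i > 0")
    case True
    then have "t * c i \<le> b i - x i"
      using that(3) unfolding r_def by (simp add: le_divide_eq)
    moreover have "0 \<le> t * c i"
      using True that(2) by simp
    ultimately show ?thesis
      using assms(3) that(1) by auto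
  next
    case False
    then have "c i < 0"
      using assms(3) that(1) by (meson linorder_neqE)
    then have "a i - x i \<le> t * c i"
      using that(3) unfolding r_def by (simp add: neg_le_divide_eq)
    moreover have "t * c i \<le> 0"
      using \<open>c i < 0\<close> that(2) by (simp add: mult_nonneg_nonpos)
    ultimately show ?thesis
      using assms(3) that(1) by auto
  qed
  define t where "t = Min (r ` S)"
  obtain i0 where "i0 \<in> S" "t = r i0"
    unfolding t_def using Min_in assms(1,2) by blast
  moreover have "0 \<le> t" "\<forall>i\<in>S. t \<le> r i"
    unfolding t_def using assms(1,2) r_nonneg by auto
  moreover have "x i0 + r i0 * c i0 = a i0 \<or> x i0 + r i0 * c i0 = b i0"
    using assms(3) \<open>i0 \<in> S\<close> unfolding r_def by auto
  ultimately show ?thesis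
    using within by blast
qed

lemma box_solution_in_Q_loc:
  assumes P: "P_set v m n \<subseteq> P"
    and ab: "\<forall>i<m. a i \<in> Q_loc P \<and> b i \<in> Q_loc P"
    and c: "\<forall>i<m. c i \<in> Q_loc P" "\<forall>j<n. w j = (\<Sum>i<m. c i * v i j)"
    and x: "\<forall>i<m. a i \<le> x i \<and> x i \<le> b i" "\<forall>j<n. w j = (\<Sum>i<m. x i * v i j)"
  shows "\<exists>y. (\<forall>i<m. y i \<in> Q_loc P \<and> a i \<le> y i \<and> y i \<le> b i) \<and>
             (\<forall>j<n. w j = (\<Sum>i<m. y i * v i j))"
  using x
proof (induction "card {i. i < m \<and> x i \<notin> Q_loc P}" arbitrary: x rule: less_induct)
  case less
  define G where "G = {i. i < m \<and> x i \<notin> Q_loc P}"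
  show ?case
  proof (cases "\<exists>d. lin_rel v m n d \<and> supp m d \<subseteq> G")
    case False
    have "\<forall>i<m. x i - c i \<in> Q_loc P"
    proof (rule relation_in_Q_loc[OF P])
      show "\<forall>j<n. (\<Sum>i<m. (x i - c i) * v i j) = 0"
        using less.prems(2) c(2) by (simp add: left_diff_distrib sum_subtractf)
      show "\<forall>i<m. i \<notin> G \<longrightarrow> x i - c i \<in> Q_loc P"
        using c(1) unfolding G_def by (simp add: Q_loc_diff)
    qed (use False in blast)
    then have "\<forall>i<m. x i \<in> Q_loc P"
      using c(1) by (metis Q_loc_add diff_add_cancel)
    then show ?thesis
      using less.prems by blast
  next
    case True
    then obtain d where d: "lin_rel v m n d" "supp m d \<subseteq> G"
      by blast
    moreover have "supp m d \<noteq> {}"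
      using d(1) unfolding lin_rel_def supp_def by blast
    moreover have "\<forall>i\<in>supp m d. d i \<noteq> 0 \<and> a i \<le> x i \<and> x i \<le> b i"
      using less.prems(1) unfolding supp_def by auto
    ultimately obtain t i0 where
        t: "\<forall>i\<in>supp m d. a i \<le> x i + t * d i \<and> x i + t * d i \<le> b i"
      and i0: "i0 \<in> supp m d" "x i0 + t * d i0 = a i0 \<or> x i0 + t * d i0 = b i0"
      using exists_step_to_boundary[OF finite_supp] by blast
    define x' where "x' i = x i + t * d i" for i
    have "\<forall>i<m. a i \<le> x' i \<and> x' i \<le> b i"
      using t less.prems(1) unfolding x'_def supp_def by auto
    moreover have "\<forall>j<n. w j = (\<Sum>i<m. x' i * v i j)"
      using less.prems(2) d(1) unfolding x'_def lin_rel_def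
      by (simp add: distrib_right sum.distrib mult.assoc flip: sum_distrib_left)
    moreover have "{i. i < m \<and> x' i \<notin> Q_loc P} \<subset> G"
    proof -
      have "{i. i < m \<and> x' i \<notin> Q_loc P} \<subseteq> G"
      proof
        fix i
        assume "i \<in> {i. i < m \<and> x' i \<notin> Q_loc P}"
        then show "i \<in> G"
          using d(2) unfolding G_def x'_def supp_def by (cases "d i = 0") auto
      qed
      moreover have "x' i0 \<in> Q_loc P"
        using i0 ab d(2) unfolding x'_def G_def supp_def by auto
      moreover have "i0 \<in> G"
        using i0(1) d(2) by blast
      ultimately show ?thesis
        by blast
    qed
    then have "card {i. i < m \<and> x' i \<notin> Q_loc P} < card G"
      unfolding G_def by (simp add: psubset_card_mono)
    ultimately show ?thesis
      using less.hyps unfolding G_def by blast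
  qed
qed

theorem mainTheorem6:
  fixes v :: "nat \<Rightarrow> nat \<Rightarrow> rat" and m n :: nat
    and a b x :: "nat \<Rightarrow> rat" and w :: "nat \<Rightarrow> rat"
  assumes ab: "\<forall>i<m. a i \<in> Q_loc (P_set v m n) \<and> b i \<in> Q_loc (P_set v m n) \<and> a i \<le> b i"
    and w_span: "\<exists>c. (\<forall>i<m. c i \<in> Q_loc (P_set v m n)) \<and> (\<forall>j<n. w j = (\<Sum>i<m. c i * v i j))"
    and x: "\<forall>i<m. a i \<le> x i \<and> x i \<le> b i"
    and wx: "\<forall>j<n. w j = (\<Sum>i<m. x i * v i j)"
  shows "\<exists>y. (\<forall>i<m. y i \<in> Q_loc (P_set v m n) \<and> a i \<le> y i \<and> y i \<le> b i) \<and>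
             (\<forall>j<n. w j = (\<Sum>i<m. y i * v i j))"
proof -
  obtain c where "\<forall>i<m. c i \<in> Q_loc (P_set v m n)" "\<forall>j<n. w j = (\<Sum>i<m. c i * v i j)"
    using w_span by blast
  with ab x wx show ?thesis
    by (intro box_solution_in_Q_loc[OF order.refl]) auto
qed

end
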